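(* Let $n\geq2$ and let $\mathbb{F}$ be a field. Then the reduct $\widetilde H_n(\mathbb{F})/\sim$ is isomorphic to $H_n(\mathbb{F})$.
   Context: Let $V=\mathbb{F}^{n+1}$ with dual $V^*$. $H_n(\mathbb{F})$ is the graph whose vertices are pairs $(x,X)$ with $x$ a point and $X$ a hyperplane of the projective space $\mathbb{P}(V)$ with $x\not\subset X$, where $(x,X)\perp(y,Y)$ iff $x\subset Y$ and $y\subset X$. $\widetilde H_n(\mathbb{F})$ is the graph with vertex set $\{v\otimes f\in V\otimes V^*: v\in V, f\in V^*, f(v)\neq0\}$ in which $v\otimes f\perp w\otimes g$ iff $f(w)=g(v)=0$. For a graph, $u\sim v$ iff $u,v$ have the same neighbourhood; the reduct $\Gamma/\sim$ has the $\sim$-classes as vertices, with adjacency inherited from representatives. *)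

theory Defs
  imports "HOL-Analysis.Analysis"
begin

text \<open>V = F^(n+1) is modelled as the type 'a ^ 'n with CARD('n) = n+1.
  The dual space V* is the set of F-linear functionals V \<Rightarrow> F.\<close>

definition dual_space :: "('a::field ^ 'n \<Rightarrow> 'a) set" where
  "dual_space = {f. (\<forall>v w. f (v + w) = f v + f w) \<and> (\<forall>c v. f (c *s v) = c * f v)}"

definition proj_point :: "'a::field ^ 'n \<Rightarrow> ('a ^ 'n) set" where
  "proj_point v = range (\<lambda>c. c *s v)"

definition proj_points :: "('a::field ^ 'n) set set" where
  "proj_points = {proj_point v | v. v \<noteq> 0}"

definition proj_hyperplanes :: "('a::field ^ 'n) set set" where
  "proj_hyperplanes = {{w. f w = 0} | f. f \<in> dual_space \<and> f \<noteq> (\<lambda>_. 0)}"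

definition H_verts :: "(('a::field ^ 'n) set \<times> ('a ^ 'n) set) set" where
  "H_verts = {(x, X). x \<in> proj_points \<and> X \<in> proj_hyperplanes \<and> \<not> x \<subseteq> X}"

definition H_adj :: "('a::field ^ 'n) set \<times> ('a ^ 'n) set \<Rightarrow> ('a ^ 'n) set \<times> ('a ^ 'n) set \<Rightarrow> bool" where
  "H_adj p q = (fst p \<subseteq> snd q \<and> fst q \<subseteq> snd p)"

text \<open>V \<otimes> V* is identified with End(V) canonically: v \<otimes> f is the map w \<mapsto> f(w) v.\<close>

definition tensor :: "'a::field ^ 'n \<Rightarrow> ('a ^ 'n \<Rightarrow> 'a) \<Rightarrow> ('a ^ 'n \<Rightarrow> 'a ^ 'n)" where
  "tensor v f = (\<lambda>w. f w *s v)"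

definition Ht_verts :: "('a::field ^ 'n \<Rightarrow> 'a ^ 'n) set" where
  "Ht_verts = {tensor v f | v f. f \<in> dual_space \<and> f v \<noteq> 0}"

definition Ht_adj :: "('a::field ^ 'n \<Rightarrow> 'a ^ 'n) \<Rightarrow> ('a ^ 'n \<Rightarrow> 'a ^ 'n) \<Rightarrow> bool" where
  "Ht_adj T S = (\<exists>v f w g. T = tensor v f \<and> S = tensor w g \<and> f \<in> dual_space \<and> g \<in> dual_space
       \<and> f v \<noteq> 0 \<and> g w \<noteq> 0 \<and> f w = 0 \<and> g v = 0)"

definition nbhd :: "'v set \<Rightarrow> ('v \<Rightarrow> 'v \<Rightarrow> bool) \<Rightarrow> 'v \<Rightarrow> 'v set" where
  "nbhd V E u = {w \<in> V. E u w}"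

definition reduct_verts :: "'v set \<Rightarrow> ('v \<Rightarrow> 'v \<Rightarrow> bool) \<Rightarrow> 'v set set" where
  "reduct_verts V E = (\<lambda>u. {w \<in> V. nbhd V E w = nbhd V E u}) ` V"

definition reduct_adj :: "('v \<Rightarrow> 'v \<Rightarrow> bool) \<Rightarrow> 'v set \<Rightarrow> 'v set \<Rightarrow> bool" where
  "reduct_adj E C D = (\<exists>u\<in>C. \<exists>w\<in>D. E u w)"

definition graph_iso :: "'v set \<Rightarrow> ('v \<Rightarrow> 'v \<Rightarrow> bool) \<Rightarrow> 'w set \<Rightarrow> ('w \<Rightarrow> 'w \<Rightarrow> bool) \<Rightarrow> bool" where
  "graph_iso V1 E1 V2 E2 = (\<exists>\<phi>. bij_betw \<phi> V1 V2 \<and> (\<forall>u\<in>V1. \<forall>w\<in>V1. E1 u w \<longleftrightarrow> E2 (\<phi> u) (\<phi> w)))"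

end

theory Submission
  imports Defs
begin

text \<open>The map \<open>v \<otimes> f \<mapsto> (\<langle>v\<rangle>, ker f)\<close> sends the vertices of \<open>\<tilde>H\<^sub>n(F)\<close> onto the antiflags
  of \<open>P(V)\<close>, and adjacency in \<open>\<tilde>H\<^sub>n(F)\<close> is exactly the pullback of adjacency in \<open>H\<^sub>n(F)\<close>.
  For such a pullback the \<open>\<sim>\<close>-classes are the fibres of the map as soon as the target graph has
  no two vertices with the same neighbourhood. \<open>H\<^sub>n(F)\<close> has this property because an antiflag
  \<open>(x, X)\<close> is recovered from its neighbours: \<open>X\<close> is the union of their points together with \<open>0\<close>,
  and \<open>x\<close> is the intersection of their hyperplanes.\<close>

definition twin_free :: "'v set \<Rightarrow> ('v \<Rightarrow> 'v \<Rightarrow> bool) \<Rightarrow> bool" where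
  "twin_free V E \<longleftrightarrow> (\<forall>p\<in>V. \<forall>q\<in>V. nbhd V E p = nbhd V E q \<longrightarrow> p = q)"

lemma nbhd_eq_iff_pullback:
  assumes onto: "\<psi> ` V = W"
    and adj: "\<And>u w. u \<in> V \<Longrightarrow> w \<in> V \<Longrightarrow> E u w \<longleftrightarrow> F (\<psi> u) (\<psi> w)"
    and tf: "twin_free W F"
    and u: "u \<in> V" and u': "u' \<in> V"
  shows "nbhd V E u = nbhd V E u' \<longleftrightarrow> \<psi> u = \<psi> u'"
proof
  assume eq: "nbhd V E u = nbhd V E u'"
  have "nbhd W F (\<psi> u) = nbhd W F (\<psi> u')"
  proof (rule set_eqI)
    fix r
    show "r \<in> nbhd W F (\<psi> u) \<longleftrightarrow> r \<in> nbhd W F (\<psi> u')"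
    proof (cases "r \<in> W")
      case True
      then obtain w where w: "w \<in> V" "r = \<psi> w" using onto by blast
      have "E u w \<longleftrightarrow> E u' w" using eq w(1) by (auto simp: nbhd_def set_eq_iff)
      then show ?thesis using w u u' by (simp add: nbhd_def adj)
    qed (simp add: nbhd_def)
  qed
  then show "\<psi> u = \<psi> u'" using tf u u' onto by (auto simp: twin_free_def)
next
  assume "\<psi> u = \<psi> u'"
  then show "nbhd V E u = nbhd V E u'" using u u' by (auto simp: nbhd_def adj)
qed

lemma graph_iso_reduct_pullback:
  assumes onto: "\<psi> ` V = W"
    and adj: "\<And>u w. u \<in> V \<Longrightarrow> w \<in> V \<Longrightarrow> E u w \<longleftrightarrow> F (\<psi> u) (\<psi> w)"
    and tf: "twin_free W F"
  shows "graph_iso (reduct_verts V E) (reduct_adj E) W F"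
proof -
  define fibre where "fibre u = {w \<in> V. \<psi> w = \<psi> u}" for u
  have reduct_eq: "reduct_verts V E = fibre ` V"
    unfolding reduct_verts_def fibre_def
    using nbhd_eq_iff_pullback[OF onto adj tf] by (intro image_cong) auto
  define \<phi> where "\<phi> C = the_elem (\<psi> ` C)" for C
  have \<phi>_fibre: "\<phi> (fibre u) = \<psi> u" if "u \<in> V" for u
    unfolding \<phi>_def by (rule the_elem_image_unique) (use that in \<open>auto simp: fibre_def\<close>)
  have "bij_betw \<phi> (fibre ` V) W"
  proof (rule bij_betw_imageI)
    show "inj_on \<phi> (fibre ` V)"
      by (rule inj_onI) (auto simp: \<phi>_fibre, auto simp: fibre_def)
    show "\<phi> ` fibre ` V = W"
      using onto \<phi>_fibre by (force simp: image_image)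
  qed
  moreover have "reduct_adj E (fibre u) (fibre w) \<longleftrightarrow> F (\<phi> (fibre u)) (\<phi> (fibre w))"
    if "u \<in> V" "w \<in> V" for u w
  proof -
    have "reduct_adj E (fibre u) (fibre w) \<longleftrightarrow> F (\<psi> u) (\<psi> w)"
      using that by (auto simp: reduct_adj_def fibre_def adj)
    then show ?thesis using that by (simp add: \<phi>_fibre)
  qed
  ultimately show ?thesis
    unfolding graph_iso_def reduct_eq by blast
qed

lemma dual_space_smult: "f \<in> dual_space \<Longrightarrow> f (c *s v) = c * f v"
  by (simp add: dual_space_def)

lemma dual_space_add: "f \<in> dual_space \<Longrightarrow> f (v + w) = f v + f w"
  by (simp add: dual_space_def)

lemma dual_space_zero: "f \<in> dual_space \<Longrightarrow> f 0 = 0"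
  using dual_space_smult[of f 0 0] by simp

lemma dual_space_diff:
  assumes f: "f \<in> dual_space"
  shows "f (v - w) = f v - f w"
proof -
  have "f (v - w) = f (v + (-1) *s w)" by (simp add: vec_eq_iff)
  also have "\<dots> = f v + (-1) * f w" by (simp only: dual_space_add[OF f] dual_space_smult[OF f])
  finally show ?thesis by simp
qed

lemma mem_proj_point: "u \<in> proj_point v \<longleftrightarrow> (\<exists>c. u = c *s v)"
  by (auto simp: proj_point_def)

lemma proj_point_self: "v \<in> proj_point v"
  unfolding mem_proj_point by (rule exI[of _ 1]) (simp add: vec_eq_iff)

lemma proj_point_subset_kernel_iff:
  assumes "f \<in> dual_space"
  shows "proj_point v \<subseteq> {u. f u = 0} \<longleftrightarrow> f v = 0"
proof
  show "proj_point v \<subseteq> {u. f u = 0} \<Longrightarrow> f v = 0" using proj_point_self[of v] by blast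
  show "f v = 0 \<Longrightarrow> proj_point v \<subseteq> {u. f u = 0}"
    using assms by (auto simp: mem_proj_point dual_space_smult)
qed

lemma dual_space_separates_point:
  fixes a v :: "'a::field ^ 'n"
  assumes a: "a \<noteq> 0" and v: "v \<notin> proj_point a"
  obtains h where "h \<in> dual_space" "h a = 0" "h v \<noteq> 0"
proof -
  obtain k where k: "a $ k \<noteq> 0" using a by (auto simp: vec_eq_iff)
  have "v \<noteq> (v $ k / a $ k) *s a" using v by (auto simp: mem_proj_point)
  then obtain j where j: "v $ j \<noteq> (v $ k / a $ k) * a $ j" by (auto simp: vec_eq_iff)
  define r where "r = a $ j / a $ k"
  define h where "h w = w $ j - r * w $ k" for w :: "'a ^ 'n"
  have "h \<in> dual_space" by (simp add: dual_space_def h_def algebra_simps)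
  moreover have "h a = 0" using k by (simp add: h_def r_def)
  moreover have "h v \<noteq> 0" using j k by (simp add: h_def r_def field_simps)
  ultimately show ?thesis by (rule that)
qed

lemma antiflag_in_H_verts:
  assumes "a \<noteq> 0" "f \<in> dual_space" "f a \<noteq> 0"
  shows "(proj_point a, {w. f w = 0}) \<in> H_verts"
proof -
  have "f \<noteq> (\<lambda>_. 0)" using assms(3) by auto
  then show ?thesis
    using assms proj_point_subset_kernel_iff[of f a]
    by (auto simp: H_verts_def proj_points_def proj_hyperplanes_def)
qed

lemma H_verts_E:
  assumes "P \<in> H_verts"
  obtains a f where "P = (proj_point a, {w. f w = 0})" "a \<noteq> 0" "f \<in> dual_space" "f a \<noteq> 0"
proof -
  obtain a f where P: "P = (proj_point a, {w. f w = 0})" "a \<noteq> 0" "f \<in> dual_space"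
    and "\<not> proj_point a \<subseteq> {w. f w = 0}"
    using assms by (auto simp: H_verts_def proj_points_def proj_hyperplanes_def)
  then have "f a \<noteq> 0" using proj_point_subset_kernel_iff by blast
  with P show ?thesis by (rule that)
qed

lemma H_adj_antiflags:
  assumes "f \<in> dual_space" "g \<in> dual_space"
  shows "H_adj (proj_point v, {u. f u = 0}) (proj_point w, {u. g u = 0}) \<longleftrightarrow> g v = 0 \<and> f w = 0"
  using assms by (simp add: H_adj_def proj_point_subset_kernel_iff)

lemma H_hyperplane_eq_neighbour_points:
  assumes P: "P \<in> H_verts"
  shows "snd P = insert 0 (\<Union>R \<in> nbhd H_verts H_adj P. fst R)"
proof
  obtain a f where P_eq: "P = (proj_point a, {w. f w = 0})"
    and a: "a \<noteq> 0" and f: "f \<in> dual_space" "f a \<noteq> 0"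
    using P by (rule H_verts_E)
  show "snd P \<subseteq> insert 0 (\<Union>R \<in> nbhd H_verts H_adj P. fst R)"
  proof
    fix w assume w: "w \<in> snd P"
    show "w \<in> insert 0 (\<Union>R \<in> nbhd H_verts H_adj P. fst R)"
    proof (cases "w = 0")
      case False
      have "w \<notin> proj_point a"
        using w False f by (auto simp: P_eq mem_proj_point dual_space_smult)
      then obtain h where h: "h \<in> dual_space" "h a = 0" "h w \<noteq> 0"
        using dual_space_separates_point[OF a] by blast
      let ?R = "(proj_point w, {u. h u = 0})"
      have "?R \<in> nbhd H_verts H_adj P"
        using antiflag_in_H_verts[OF False h(1,3)] H_adj_antiflags[OF f(1) h(1)] h(2) w
        by (simp add: nbhd_def P_eq)
      then show ?thesis using proj_point_self[of w] by force
    qed simp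
  qed
  show "insert 0 (\<Union>R \<in> nbhd H_verts H_adj P. fst R) \<subseteq> snd P"
    using dual_space_zero[OF f(1)] by (auto simp: P_eq nbhd_def H_adj_def)
qed

lemma H_point_eq_neighbour_hyperplanes:
  assumes P: "P \<in> H_verts"
  shows "fst P = (\<Inter>R \<in> nbhd H_verts H_adj P. snd R)"
proof
  show "fst P \<subseteq> (\<Inter>R \<in> nbhd H_verts H_adj P. snd R)"
    by (auto simp: nbhd_def H_adj_def)
  obtain a f where P_eq: "P = (proj_point a, {w. f w = 0})"
    and a: "a \<noteq> 0" and f: "f \<in> dual_space" "f a \<noteq> 0"
    using P by (rule H_verts_E)
  show "(\<Inter>R \<in> nbhd H_verts H_adj P. snd R) \<subseteq> fst P"
  proof (rule subsetI, rule ccontr)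
    fix v assume v: "v \<in> (\<Inter>R \<in> nbhd H_verts H_adj P. snd R)" and "v \<notin> fst P"
    then obtain h where h: "h \<in> dual_space" "h a = 0" "h v \<noteq> 0"
      using dual_space_separates_point[OF a] by (auto simp: P_eq)
    \<comment> \<open>the projection of \<open>v\<close> to \<open>ker f\<close> along \<open>a\<close>; \<open>(\<langle>c\<rangle>, ker h)\<close> is a neighbour avoiding \<open>v\<close>\<close>
    define c where "c = v - (f v / f a) *s a"
    have fc: "f c = 0" using f by (simp add: c_def dual_space_diff dual_space_smult)
    have hc: "h c \<noteq> 0" using h by (simp add: c_def dual_space_diff dual_space_smult)
    then have "c \<noteq> 0" using dual_space_zero[OF h(1)] by auto
    then have "(proj_point c, {u. h u = 0}) \<in> nbhd H_verts H_adj P"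
      using antiflag_in_H_verts[OF _ h(1) hc] H_adj_antiflags[OF f(1) h(1)] h(2) fc
      by (simp add: nbhd_def P_eq)
    then show False using v h(3) by auto
  qed
qed

lemma twin_free_H: "twin_free H_verts H_adj"
  unfolding twin_free_def
  using H_point_eq_neighbour_hyperplanes H_hyperplane_eq_neighbour_points
  by (metis prod_eqI)

definition antiflag_of :: "('a::field ^ 'n \<Rightarrow> 'a ^ 'n) \<Rightarrow> ('a ^ 'n) set \<times> ('a ^ 'n) set" where
  "antiflag_of T = (range T, {u. T u = 0})"

lemma antiflag_of_tensor:
  assumes f: "f \<in> dual_space" and fv: "f v \<noteq> 0"
  shows "antiflag_of (tensor v f) = (proj_point v, {u. f u = 0})"
proof -
  have "range (tensor v f) = proj_point v"
  proof
    show "range (tensor v f) \<subseteq> proj_point v"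
      by (auto simp: tensor_def mem_proj_point)
    have "c *s v = tensor v f ((c / f v) *s v)" for c
      using fv by (simp add: tensor_def dual_space_smult[OF f])
    then have "c *s v \<in> range (tensor v f)" for c by (rule range_eqI)
    then show "proj_point v \<subseteq> range (tensor v f)"
      by (auto simp: mem_proj_point)
  qed
  moreover have "v \<noteq> 0" using fv dual_space_zero[OF f] by auto
  ultimately show ?thesis by (simp add: antiflag_of_def tensor_def)
qed

lemma antiflag_of_Ht_verts: "antiflag_of ` Ht_verts = H_verts"
proof
  show "antiflag_of ` Ht_verts \<subseteq> H_verts"
  proof
    fix P assume "P \<in> antiflag_of ` Ht_verts"
    then obtain v f where P_eq: "P = antiflag_of (tensor v f)"
      and f: "f \<in> dual_space" "f v \<noteq> 0"
      by (auto simp: Ht_verts_def)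
    have "v \<noteq> 0" using f dual_space_zero by force
    then show "P \<in> H_verts" using f by (simp add: P_eq antiflag_of_tensor antiflag_in_H_verts)
  qed
  show "H_verts \<subseteq> antiflag_of ` Ht_verts"
  proof
    fix P assume "P \<in> H_verts"
    then obtain a f where "P = (proj_point a, {w. f w = 0})" "f \<in> dual_space" "f a \<noteq> 0"
      by (rule H_verts_E)
    then have "P = antiflag_of (tensor a f)" "tensor a f \<in> Ht_verts"
      by (auto simp: Ht_verts_def antiflag_of_tensor)
    then show "P \<in> antiflag_of ` Ht_verts" by blast
  qed
qed

lemma Ht_adj_iff_H_adj:
  assumes "T \<in> Ht_verts" "S \<in> Ht_verts"
  shows "Ht_adj T S \<longleftrightarrow> H_adj (antiflag_of T) (antiflag_of S)"
proof -
  obtain v f w g where T: "T = tensor v f" "f \<in> dual_space" "f v \<noteq> 0"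
    and S: "S = tensor w g" "g \<in> dual_space" "g w \<noteq> 0"
    using assms by (auto simp: Ht_verts_def)
  have H_adj_TS: "H_adj (antiflag_of T) (antiflag_of S) \<longleftrightarrow> g v = 0 \<and> f w = 0"
    using T S by (simp add: antiflag_of_tensor H_adj_antiflags)
  show ?thesis
  proof
    assume "Ht_adj T S"
    then obtain v' f' w' g' where "T = tensor v' f'" "S = tensor w' g'"
      "f' \<in> dual_space" "g' \<in> dual_space" "f' v' \<noteq> 0" "g' w' \<noteq> 0" "f' w' = 0" "g' v' = 0"
      by (auto simp: Ht_adj_def)
    then show "H_adj (antiflag_of T) (antiflag_of S)"
      by (simp add: antiflag_of_tensor H_adj_antiflags)
  next
    assume "H_adj (antiflag_of T) (antiflag_of S)"
    then have "g v = 0" "f w = 0" using H_adj_TS by auto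
    then show "Ht_adj T S" unfolding Ht_adj_def using T S by blast
  qed
qed

theorem lemma3p1:
  assumes "CARD('n::finite) \<ge> 3"
  shows "graph_iso (reduct_verts (Ht_verts :: ('a::field ^ 'n \<Rightarrow> 'a ^ 'n) set) Ht_adj)
                   (reduct_adj Ht_adj)
                   (H_verts :: (('a ^ 'n) set \<times> ('a ^ 'n) set) set) H_adj"
  using antiflag_of_Ht_verts Ht_adj_iff_H_adj twin_free_H
  by (rule graph_iso_reduct_pullback)

end
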